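(* (i) For $s=\sigma+i\tau$ with any fixed real $\sigma\notin\{1-s_i:i\ge0\}$, there is $c=c(\sigma)>0$ with $|\psi(1-s)-\psi(1)|\ge c$ for all $\tau\in\mathbb{R}$. (ii) For any compact $K\subset\mathbb{R}$ there is $c>0$ with $|\psi(1-s)-\psi(1)|\ge c$ for all $s=\sigma+i\tau$ with $\sigma\in K$ and $|\tau|\ge1$.
   Context: $\psi$ is the digamma function; $s_0=1>s_1>s_2>\cdots$ are the (real) roots of $\psi(s)=\psi(1)$, with $s_i\in(-i,-(i-1))$ for $i\ge1$. *)

theory Defs
  imports "HOL-Analysis.Analysis"
begin

text \<open>Poles (the
  non-positive integers) are excluded explicitly, since the library's Digamma
  takes a junk value there (in fact Digamma 0 = Digamma 1 in the library).\<close>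
definition digamma_roots :: "real set" where
  "digamma_roots = {x. complex_of_real x \<notin> \<int>\<^sub>\<le>\<^sub>0 \<and>
       Digamma (complex_of_real x) = Digamma (1::complex)}"

end

theory Submission imports Defs begin

text \<open>Off the real axis the series for the digamma function gives
  \<open>Im \<psi>(z) = \<Sum>\<^sub>k Im z / \<bar>z + k\<bar>\<^sup>2\<close>, all of whose terms have the sign of \<open>Im z\<close>, while \<open>\<psi>(1)\<close>
  is real.  Hence \<open>\<bar>\<psi>(z) - \<psi>(1)\<bar>\<close> dominates every partial sum
  \<open>\<bar>Im z\<bar> \<Sum>\<^sub>k\<^sub>\<in>\<^sub>F 1 / \<bar>z + k\<bar>\<^sup>2\<close>.  Taking the roughly \<open>\<bar>Im z\<bar>\<close> terms with \<open>k < \<bar>Im z\<bar>\<close> bounds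
  \<open>\<bar>\<psi>(z) - \<psi>(1)\<bar>\<close> from below uniformly in a vertical strip away from the real axis;
  the single term \<open>k = -Re z\<close> does the same near a pole.  On the remaining compact
  piece of a vertical line, \<open>\<psi>(z) - \<psi>(1)\<close> is continuous, and it is nowhere zero because
  the line meets the real axis away from the roots of \<open>\<psi>(x) = \<psi>(1)\<close>.\<close>

lemma Im_euler_mascheroni [simp]: "Im (euler_mascheroni :: complex) = 0"
  by (metis Im_complex_of_real of_real_euler_mascheroni)

lemma Im_Digamma_sums:
  fixes z :: complex
  assumes "z \<noteq> 0"
  shows "(\<lambda>k. Im z / (norm (z + of_nat k))\<^sup>2) sums Im (Digamma z)"
proof -
  have "(\<lambda>k. inverse (of_nat (Suc k)) - inverse (z + of_nat k)) sums (Digamma z + euler_mascheroni)"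
    using summable_Digamma[OF assms] by (simp add: Digamma_def summable_sums)
  from sums_Im[OF this]
  have "(\<lambda>k. Im (inverse (of_nat (Suc k)) - inverse (z + of_nat k))) sums Im (Digamma z)"
    by simp
  moreover have "Im (inverse (of_nat (Suc k)) - inverse (z + of_nat k)) = Im z / (norm (z + of_nat k))\<^sup>2"
    for k
    by (simp add: complex_norm_square[symmetric] cmod_power2 del: of_nat_Suc)
  ultimately show ?thesis by (simp only:)
qed

lemma Digamma_diff_1_ge_partial_sum:
  fixes z :: complex
  assumes "z \<noteq> 0" "finite F"
  shows "\<bar>Im z\<bar> * (\<Sum>k\<in>F. 1 / (norm (z + of_nat k))\<^sup>2) \<le> norm (Digamma z - Digamma 1)"
proof -
  let ?g = "\<lambda>k::nat. \<bar>Im z\<bar> * (1 / (norm (z + of_nat k))\<^sup>2)"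
  have "(\<lambda>k. sgn (Im z) * (Im z / (norm (z + of_nat k))\<^sup>2)) sums (sgn (Im z) * Im (Digamma z))"
    by (rule sums_mult[OF Im_Digamma_sums[OF assms(1)]])
  moreover have "sgn (Im z) * (Im z / (norm (z + of_nat k))\<^sup>2) = ?g k" for k
    by (simp add: sgn_mult_self_eq abs_sgn)
  ultimately have sums: "?g sums (sgn (Im z) * Im (Digamma z))" by (simp only:)
  have "\<bar>Im z\<bar> * (\<Sum>k\<in>F. 1 / (norm (z + of_nat k))\<^sup>2) = (\<Sum>k\<in>F. ?g k)"
    by (simp add: sum_distrib_left)
  also have "\<dots> \<le> sgn (Im z) * Im (Digamma z)"
    using sum_le_suminf[OF sums_summable[OF sums] assms(2)] sums_unique[OF sums] by simp
  also have "\<dots> \<le> \<bar>Im (Digamma z - Digamma 1)\<bar>"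
    by (auto simp: sgn_real_def)
  also have "\<dots> \<le> norm (Digamma z - Digamma 1)"
    by (rule abs_Im_le_cmod)
  finally show ?thesis .
qed

lemma Digamma_diff_1_ge_in_strip:
  fixes z :: complex
  assumes "\<bar>Re z\<bar> \<le> B" "1 \<le> \<bar>Im z\<bar>"
  shows "1 / (B + 2)\<^sup>2 \<le> norm (Digamma z - Digamma 1)"
proof -
  define y where "y = \<bar>Im z\<bar>"
  define N where "N = nat \<lceil>y\<rceil>"
  have y: "1 \<le> y" "0 \<le> B" using assms by (auto simp: y_def)
  have N: "y \<le> real N" "real N < y + 1" unfolding N_def using y by linarith+
  have term_ge: "1 / ((B + 2)\<^sup>2 * y\<^sup>2) \<le> 1 / (norm (z + of_nat k))\<^sup>2" if "k < N" for k
  proof -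
    have "real k + 1 \<le> real N" using that by linarith
    then have "real k < y" using N by linarith
    have "norm (z + of_nat k) \<le> \<bar>Re z\<bar> + \<bar>Im z\<bar> + real k"
      using norm_triangle_ineq[of z "of_nat k"] cmod_le[of z] by simp
    also have "\<dots> \<le> (B + 2) * y"
      using assms(1) \<open>real k < y\<close> y mult_left_mono[of 1 y B] by (simp add: y_def algebra_simps)
    finally have "(norm (z + of_nat k))\<^sup>2 \<le> ((B + 2) * y)\<^sup>2"
      by (simp add: power_mono)
    moreover have "z + of_nat k \<noteq> 0" using y by (auto simp: y_def complex_eq_iff)
    ultimately show ?thesis by (simp add: frac_le power_mult_distrib)
  qed
  have "1 / (B + 2)\<^sup>2 = y * (y * (1 / ((B + 2)\<^sup>2 * y\<^sup>2)))"
    using y by (simp add: divide_simps power2_eq_square)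
  also have "\<dots> \<le> y * (\<Sum>k<N. 1 / ((B + 2)\<^sup>2 * y\<^sup>2))"
    using N y by (intro mult_left_mono) (auto intro!: divide_right_mono)
  also have "\<dots> \<le> y * (\<Sum>k<N. 1 / (norm (z + of_nat k))\<^sup>2)"
    using y term_ge by (intro mult_left_mono sum_mono) auto
  also have "\<dots> \<le> norm (Digamma z - Digamma 1)"
    unfolding y_def using y by (intro Digamma_diff_1_ge_partial_sum) (auto simp: y_def)
  finally show ?thesis .
qed

lemma Digamma_diff_1_ge_near_pole:
  fixes z :: complex
  assumes "Re z = - of_nat m" "Im z \<noteq> 0" "\<bar>Im z\<bar> \<le> 1"
  shows "1 \<le> norm (Digamma z - Digamma 1)"
proof -
  have "(norm (z + of_nat m))\<^sup>2 = \<bar>Im z\<bar> * \<bar>Im z\<bar>"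
    unfolding cmod_power2 using assms(1) by (simp add: power2_eq_square)
  then have "\<bar>Im z\<bar> * (\<Sum>k\<in>{m}. 1 / (norm (z + of_nat k))\<^sup>2) = 1 / \<bar>Im z\<bar>"
    using assms(2) by (simp add: divide_simps)
  moreover have "1 \<le> 1 / \<bar>Im z\<bar>"
    using assms(2,3) by simp
  ultimately have "1 \<le> \<bar>Im z\<bar> * (\<Sum>k\<in>{m}. 1 / (norm (z + of_nat k))\<^sup>2)"
    by simp
  also have "\<dots> \<le> norm (Digamma z - Digamma 1)"
    using assms(2) by (intro Digamma_diff_1_ge_partial_sum) auto
  finally show ?thesis .
qed

lemma Digamma_neq_Digamma_1_if_Im_nonzero:
  fixes z :: complex
  assumes "Im z \<noteq> 0"
  shows "Digamma z \<noteq> Digamma 1"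
proof -
  have "z \<noteq> 0" using assms by auto
  then have "0 < \<bar>Im z\<bar> * (\<Sum>k\<in>{0}. 1 / (norm (z + of_nat k))\<^sup>2)"
    using assms by simp
  also have "\<dots> \<le> norm (Digamma z - Digamma 1)"
    using \<open>z \<noteq> 0\<close> by (intro Digamma_diff_1_ge_partial_sum) auto
  finally show ?thesis by auto
qed

lemma Digamma_diff_1_bounded_below_in_strip:
  assumes "bounded K"
  shows "\<exists>c>0. \<forall>x\<in>K. \<forall>y. 1 \<le> \<bar>y\<bar> \<longrightarrow> c \<le> norm (Digamma (Complex x y) - Digamma 1)"
proof -
  obtain B where B: "\<And>x. x \<in> K \<Longrightarrow> \<bar>x\<bar> \<le> B"
    using assms by (auto simp: bounded_real)
  have "0 < 1 / (\<bar>B\<bar> + 2)\<^sup>2" by simp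
  moreover have "1 / (\<bar>B\<bar> + 2)\<^sup>2 \<le> norm (Digamma (Complex x y) - Digamma 1)"
    if "x \<in> K" "1 \<le> \<bar>y\<bar>" for x y
    using B[OF that(1)] that(2) by (intro Digamma_diff_1_ge_in_strip) auto
  ultimately show ?thesis by blast
qed

lemma continuous_on_compact_pos_bounded_below:
  fixes f :: "'a::topological_space \<Rightarrow> real"
  assumes "compact S" "continuous_on S f" "\<And>x. x \<in> S \<Longrightarrow> 0 < f x"
  shows "\<exists>c>0. \<forall>x\<in>S. c \<le> f x"
proof (cases "S = {}")
  case False
  then obtain x0 where "x0 \<in> S" "\<And>x. x \<in> S \<Longrightarrow> f x0 \<le> f x"
    using continuous_attains_inf[OF assms(1) _ assms(2)] by blast
  then show ?thesis using assms(3) by blast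
qed (use zero_less_one in blast)

lemma Digamma_diff_1_bounded_below_on_line:
  assumes "a \<notin> digamma_roots"
  shows "\<exists>c>0. \<forall>t. Complex a t \<notin> \<int>\<^sub>\<le>\<^sub>0 \<longrightarrow> c \<le> norm (Digamma (Complex a t) - Digamma 1)"
proof -
  have real_point: "Complex a 0 = complex_of_real a" by (simp add: complex_eq_iff)
  obtain c1 where c1: "c1 > 0" "\<And>t. 1 \<le> \<bar>t\<bar> \<Longrightarrow> c1 \<le> norm (Digamma (Complex a t) - Digamma 1)"
    using Digamma_diff_1_bounded_below_in_strip[of "{a}"] by auto
  obtain c2 where c2: "c2 > 0" "\<And>t. \<bar>t\<bar> \<le> 1 \<Longrightarrow> Complex a t \<notin> \<int>\<^sub>\<le>\<^sub>0 \<Longrightarrow>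
      c2 \<le> norm (Digamma (Complex a t) - Digamma 1)"
  proof (cases "complex_of_real a \<in> \<int>\<^sub>\<le>\<^sub>0")
    case True
    then obtain m where "complex_of_real a = - of_nat m" by (elim nonpos_Ints_cases')
    then have "Re (Complex a t) = - of_nat m" for t by (simp add: complex_eq_iff)
    then have "1 \<le> norm (Digamma (Complex a t) - Digamma 1)"
      if "\<bar>t\<bar> \<le> 1" "Complex a t \<notin> \<int>\<^sub>\<le>\<^sub>0" for t
      using that True real_point by (intro Digamma_diff_1_ge_near_pole) auto
    then show ?thesis using that[of 1] by simp
  next
    case False
    have off_poles: "Complex a t \<notin> \<int>\<^sub>\<le>\<^sub>0" for t
    proof (cases "t = 0")
      case False
      then show ?thesis by (auto elim!: nonpos_Ints_cases simp: complex_eq_iff)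
    qed (use False real_point in simp)
    have "Digamma (Complex a t) \<noteq> Digamma 1" for t
      using assms False real_point Digamma_neq_Digamma_1_if_Im_nonzero[of "Complex a t"]
      by (cases "t = 0") (auto simp: digamma_roots_def)
    then have pos: "0 < norm (Digamma (Complex a t) - Digamma 1)" for t
      by (metis right_minus_eq zero_less_norm_iff)
    have "continuous_on {-1..1} (\<lambda>t. Complex a t)"
      unfolding Complex_eq by (intro continuous_intros)
    then have "continuous_on {-1..1} (\<lambda>t. Digamma (Complex a t))"
      using off_poles
      by (intro continuous_on_compose2[OF continuous_on_Polygamma[of "range (Complex a)"]]) auto
    then have "continuous_on {-1..1} (\<lambda>t. norm (Digamma (Complex a t) - Digamma 1))"
      by (intro continuous_intros)
    then show ?thesis
      using continuous_on_compact_pos_bounded_below[OF compact_Icc _ pos] that by force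
  qed
  show ?thesis
  proof (intro exI[of _ "min c1 c2"] conjI allI impI)
    show "0 < min c1 c2" using c1 c2 by simp
    show "min c1 c2 \<le> norm (Digamma (Complex a t) - Digamma 1)"
      if "Complex a t \<notin> \<int>\<^sub>\<le>\<^sub>0" for t
      using c1(2)[of t] c2(2)[of t] that by (cases "1 \<le> \<bar>t\<bar>") auto
  qed
qed

theorem lemma10p3:
  shows "(\<forall>\<sigma>::real. \<sigma> \<notin> (\<lambda>r. 1 - r) ` digamma_roots \<longrightarrow>
            (\<exists>c>0. \<forall>\<tau>::real.
               1 - Complex \<sigma> \<tau> \<notin> \<int>\<^sub>\<le>\<^sub>0 \<longrightarrow>
               norm (Digamma (1 - Complex \<sigma> \<tau>) - Digamma 1) \<ge> c))
       \<and> (\<forall>K::real set. compact K \<longrightarrow>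
            (\<exists>c>0. \<forall>\<sigma>\<in>K. \<forall>\<tau>::real. \<bar>\<tau>\<bar> \<ge> 1 \<longrightarrow>
               norm (Digamma (1 - Complex \<sigma> \<tau>) - Digamma 1) \<ge> c))"
proof (intro conjI allI impI)
  have reflect: "1 - Complex \<sigma> \<tau> = Complex (1 - \<sigma>) (- \<tau>)" for \<sigma> \<tau>
    by (simp add: complex_eq_iff)
  show "\<exists>c>0. \<forall>\<tau>. 1 - Complex \<sigma> \<tau> \<notin> \<int>\<^sub>\<le>\<^sub>0 \<longrightarrow>
          c \<le> norm (Digamma (1 - Complex \<sigma> \<tau>) - Digamma 1)"
    if "\<sigma> \<notin> (\<lambda>r. 1 - r) ` digamma_roots" for \<sigma>
  proof -
    have "1 - \<sigma> \<notin> digamma_roots" using that by force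
    from Digamma_diff_1_bounded_below_on_line[OF this] obtain c where
      "c > 0" "\<And>t. Complex (1 - \<sigma>) t \<notin> \<int>\<^sub>\<le>\<^sub>0 \<Longrightarrow> c \<le> norm (Digamma (Complex (1 - \<sigma>) t) - Digamma 1)"
      by blast
    then show ?thesis unfolding reflect by blast
  qed
  show "\<exists>c>0. \<forall>\<sigma>\<in>K. \<forall>\<tau>. 1 \<le> \<bar>\<tau>\<bar> \<longrightarrow> c \<le> norm (Digamma (1 - Complex \<sigma> \<tau>) - Digamma 1)"
    if "compact K" for K
  proof -
    have "compact ((\<lambda>\<sigma>. 1 - \<sigma>) ` K)"
      using that by (intro compact_continuous_image continuous_intros)
    then have "bounded ((\<lambda>\<sigma>. 1 - \<sigma>) ` K)" by (rule compact_imp_bounded)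
    from Digamma_diff_1_bounded_below_in_strip[OF this] show ?thesis
      unfolding reflect by force
  qed
qed

end
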